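(* Let $a,b,g,h>0$ and let $\theta,\psi\in\mathbb{R}$ satisfy the constraint $$(g+b\,\mathrm{ch}\,\psi-a\,\mathrm{ch}\,\theta)^2-(b\,\mathrm{sh}\,\psi-a\,\mathrm{sh}\,\theta)^2=h^2 .$$ Put $A(\theta)=2gb-2ab\,\mathrm{ch}\,\theta$, $B(\theta)=2ab\,\mathrm{sh}\,\theta$, $C(\theta)=h^2-g^2-b^2-a^2+2ag\,\mathrm{ch}\,\theta$, and assume $A(\theta)+C(\theta)\neq 0$. Then $B(\theta)^2+C(\theta)^2-A(\theta)^2\ge 0$ and, for one choice of the sign $\pm$, $$\psi=2\,\mathrm{artanh}\,\frac{-B(\theta)\pm\sqrt{B(\theta)^2+C(\theta)^2-A(\theta)^2}}{A(\theta)+C(\theta)} .$$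
   Context: $\mathrm{ch},\mathrm{sh}$ denote the hyperbolic cosine and sine and $\mathrm{artanh}$ the inverse hyperbolic tangent. Interpretation: a Minkowskian planar 4R linkage in $\mathbb{R}^2$ with Lorentzian form $\langle u,v\rangle=u_1v_1-u_2v_2$ has fixed pivots $O=(0,0)$, $C=(g,0)$, moving pivots $A=(a\,\mathrm{ch}\,\theta,a\,\mathrm{sh}\,\theta)$ (input crank angle $\theta$) and $B=(g+b\,\mathrm{ch}\,\psi,b\,\mathrm{sh}\,\psi)$ (output crank angle $\psi$), and the coupler condition is $\langle B-A,B-A\rangle=h^2$, which is the displayed constraint. *)

theory Defs
  imports Complex_Main
begin

end

theory Submission
  imports Defs
begin

text \<open>
  Expanding the coupler condition with \<open>ch\<^sup>2 - sh\<^sup>2 = 1\<close> turns it into the linear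
  Freudenstein-type equation \<open>A ch \<psi> + B sh \<psi> = C\<close>.  The half-argument substitution
  \<open>t = th(\<psi>/2)\<close> makes this the quadratic \<open>(A + C) t\<^sup>2 + 2 B t + (A - C) = 0\<close>, whose
  reduced discriminant is \<open>B\<^sup>2 + C\<^sup>2 - A\<^sup>2\<close>.  Having the real root \<open>t\<close>, the discriminant
  is nonnegative, and \<open>\<psi> = 2 artanh t\<close> is read off from the quadratic formula.
\<close>

lemma minkowski_coupler_iff_linear:
  fixes a b g h \<theta> \<psi> :: real
  shows "(g + b * cosh \<psi> - a * cosh \<theta>)\<^sup>2 - (b * sinh \<psi> - a * sinh \<theta>)\<^sup>2 = h\<^sup>2 \<longleftrightarrow>
         (2*g*b - 2*a*b*cosh \<theta>) * cosh \<psi> + (2*a*b*sinh \<theta>) * sinh \<psi>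
           = h\<^sup>2 - g\<^sup>2 - b\<^sup>2 - a\<^sup>2 + 2*a*g*cosh \<theta>"
proof -
  have "cosh \<theta> ^ 2 = sinh \<theta> ^ 2 + 1" "cosh \<psi> ^ 2 = sinh \<psi> ^ 2 + 1"
    by (simp_all add: cosh_square_eq)
  then show ?thesis
    by (simp add: power2_eq_square algebra_simps)
qed

lemma cosh_sinh_linear_imp_tanh_half_quadratic:
  fixes A B C x :: real
  assumes "A * cosh x + B * sinh x = C"
  shows "(A + C) * (tanh (x/2))\<^sup>2 + 2 * B * tanh (x/2) + (A - C) = 0"
proof -
  define c s where "c = cosh (x/2)" and "s = sinh (x/2)"
  have "c > 0" by (simp add: c_def)
  have "c\<^sup>2 = s\<^sup>2 + 1" by (simp add: c_def s_def cosh_square_eq)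
  moreover have "cosh x = c\<^sup>2 + s\<^sup>2" "sinh x = 2 * s * c"
    using cosh_double[of "x/2"] sinh_double[of "x/2"] by (simp_all add: c_def s_def)
  ultimately have "(A + C) * s\<^sup>2 + 2 * B * s * c + (A - C) * c\<^sup>2 = 0"
    using assms by (simp add: algebra_simps power2_eq_square)
  then have "((A + C) * s\<^sup>2 + 2 * B * s * c + (A - C) * c\<^sup>2) / c\<^sup>2 = 0"
    by simp
  moreover have "tanh (x/2) = s / c"
    by (simp add: c_def s_def tanh_def)
  ultimately show ?thesis
    using \<open>c > 0\<close> by (simp only:) (simp add: field_simps power2_eq_square)
qed

lemma quadratic_root_discriminant:
  fixes p q r t :: real
  assumes "p * t\<^sup>2 + 2 * r * t + q = 0"
  shows "r\<^sup>2 - p * q = (p * t + r)\<^sup>2"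
proof -
  have "(p * t + r)\<^sup>2 = p * (p * t\<^sup>2 + 2 * r * t) + r\<^sup>2"
    by (simp add: power2_eq_square algebra_simps)
  also have "p * t\<^sup>2 + 2 * r * t = - q"
    using assms by linarith
  finally show ?thesis
    by simp
qed

lemma quadratic_root_formula:
  fixes p q r t :: real
  assumes "p \<noteq> 0" and "p * t\<^sup>2 + 2 * r * t + q = 0"
  shows "\<exists>\<sigma> \<in> {1, -1}. t = (- r + \<sigma> * sqrt (r\<^sup>2 - p * q)) / p"
proof -
  define \<sigma> where "\<sigma> = (if p * t + r \<ge> 0 then 1 else -1 :: real)"
  have "\<sigma> * sqrt (r\<^sup>2 - p * q) = p * t + r"
    unfolding quadratic_root_discriminant[OF assms(2)] by (simp add: \<sigma>_def)
  then have "t = (- r + \<sigma> * sqrt (r\<^sup>2 - p * q)) / p"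
    using assms(1) by (simp add: field_simps)
  moreover have "\<sigma> \<in> {1, -1}"
    by (simp add: \<sigma>_def)
  ultimately show ?thesis
    by blast
qed

theorem mainTheorem3:
  fixes a b g h \<theta> \<psi> :: real
  assumes "a > 0" and "b > 0" and "g > 0" and "h > 0"
    and constr: "(g + b * cosh \<psi> - a * cosh \<theta>)\<^sup>2 - (b * sinh \<psi> - a * sinh \<theta>)\<^sup>2 = h\<^sup>2"
    and AC: "(2*g*b - 2*a*b*cosh \<theta>) + (h\<^sup>2 - g\<^sup>2 - b\<^sup>2 - a\<^sup>2 + 2*a*g*cosh \<theta>) \<noteq> 0"
  shows "(2*a*b*sinh \<theta>)\<^sup>2 + (h\<^sup>2 - g\<^sup>2 - b\<^sup>2 - a\<^sup>2 + 2*a*g*cosh \<theta>)\<^sup>2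
           - (2*g*b - 2*a*b*cosh \<theta>)\<^sup>2 \<ge> 0
       \<and> (\<exists>s \<in> {1, -1::real}.
            let A = 2*g*b - 2*a*b*cosh \<theta>;
                B = 2*a*b*sinh \<theta>;
                C = h\<^sup>2 - g\<^sup>2 - b\<^sup>2 - a\<^sup>2 + 2*a*g*cosh \<theta>;
                x = (- B + s * sqrt (B\<^sup>2 + C\<^sup>2 - A\<^sup>2)) / (A + C)
            in \<bar>x\<bar> < 1 \<and> \<psi> = 2 * artanh x)"
proof -
  define A B C where "A = 2*g*b - 2*a*b*cosh \<theta>" and "B = 2*a*b*sinh \<theta>"
    and "C = h\<^sup>2 - g\<^sup>2 - b\<^sup>2 - a\<^sup>2 + 2*a*g*cosh \<theta>"
  define t where "t = tanh (\<psi>/2)"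
  have "A * cosh \<psi> + B * sinh \<psi> = C"
    using constr minkowski_coupler_iff_linear by (simp add: A_def B_def C_def)
  then have quadratic: "(A + C) * t\<^sup>2 + 2 * B * t + (A - C) = 0"
    unfolding t_def by (rule cosh_sinh_linear_imp_tanh_half_quadratic)
  have discr: "B\<^sup>2 + C\<^sup>2 - A\<^sup>2 = B\<^sup>2 - (A + C) * (A - C)"
    by (simp add: power2_eq_square algebra_simps)
  have "B\<^sup>2 + C\<^sup>2 - A\<^sup>2 \<ge> 0"
    unfolding discr quadratic_root_discriminant[OF quadratic] by simp
  moreover have "A + C \<noteq> 0"
    using AC by (simp add: A_def C_def)
  then obtain \<sigma> where "\<sigma> \<in> {1, -1}"
    and "t = (- B + \<sigma> * sqrt (B\<^sup>2 + C\<^sup>2 - A\<^sup>2)) / (A + C)"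
    using quadratic_root_formula[OF _ quadratic] unfolding discr by blast
  moreover have "\<bar>t\<bar> < 1" "\<psi> = 2 * artanh t"
    using tanh_real_bounds[of "\<psi>/2"] by (auto simp: t_def artanh_tanh_real)
  ultimately show ?thesis
    unfolding A_def B_def C_def Let_def by auto
qed

end
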